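(* Let $K$ be a continuous $1$-periodic function which is the covariance kernel of a mean-zero stationary Gaussian process on $S^1=[0,1)$ with almost surely continuous sample paths, normalized so that $\int_0^1K(x)\,dx=1$. For real $\lambda$ let \[ A_\lambda=\Big\{q:\ q=\lambda+p'+p^2 \text{ for some } 1\text{-periodic } p\in C^\infty \text{ with } \int_0^1p=0\Big\},\qquad J(q)=\tfrac12\langle q,\mathbf{K}^{-1}q\rangle. \] Then \[ \liminf_{\lambda\to-\infty}\frac{1}{\lambda^2}\Big\{\inf_{q\in A_\lambda}J(q)\Big\}\ge\frac{1}{2K(0)}. \]
   Context: $\mathbf{K}f(x)=\int_0^1K(x-y)f(y)\,dy$ (with $K$ extended periodically) is the covariance operator; it acts diagonally on Fourier modes $e^{2\pi inx}$ with nonnegative eigenvalues $\hat K(n)=\int_0^1K(x)e^{-2\pi inx}dx$. For a periodic $q$ with Fourier coefficients $\hat q(n)$, $\langle q,\mathbf{K}^{-1}q\rangle=\sum_n|\hat q(n)|^2/\hat K(n)$, interpreted as $+\infty$ if the sum diverges or if $\hat q(n)\neq0$ for some $n$ with $\hat K(n)=0$. *)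

theory Defs
  imports "HOL-Probability.Probability"
begin

definition fourier_coeff :: "(real \<Rightarrow> real) \<Rightarrow> int \<Rightarrow> complex" where
  "fourier_coeff f n =
     integral {0..1} (\<lambda>x. complex_of_real (f x) * cis (- 2 * pi * real_of_int n * x))"

text \<open>The quadratic form q, K^{-1} q = sum over n of |q_n|^2 / K_n, with value infinity
  if the sum diverges or if q_n is nonzero for some n with K_n = 0.  Eigenvalues of the
  covariance operator are the (real, nonnegative) Fourier coefficients of K.\<close>
definition inv_cov_form :: "(real \<Rightarrow> real) \<Rightarrow> (real \<Rightarrow> real) \<Rightarrow> ennreal" where
  "inv_cov_form K q =
     (\<integral>\<^sup>+ n. (if Re (fourier_coeff K n) = 0
               then (if fourier_coeff q n = 0 then 0 else \<infinity>)
               else ennreal ((cmod (fourier_coeff q n))\<^sup>2 / Re (fourier_coeff K n)))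
        \<partial>count_space (UNIV :: int set))"

definition J_functional :: "(real \<Rightarrow> real) \<Rightarrow> (real \<Rightarrow> real) \<Rightarrow> ennreal" where
  "J_functional K q = inv_cov_form K q / 2"

definition smooth_fun :: "(real \<Rightarrow> real) \<Rightarrow> bool" where
  "smooth_fun p \<longleftrightarrow> (\<forall>k x. ((deriv ^^ k) p) differentiable (at x))"

definition A_set :: "real \<Rightarrow> (real \<Rightarrow> real) set" where
  "A_set lam = {q. \<exists>p. smooth_fun p \<and> (\<forall>x. p (x + 1) = p x) \<and> integral {0..1} p = 0
                      \<and> q = (\<lambda>x. lam + deriv p x + (p x)\<^sup>2)}"

definition centered_gaussian_rv :: "'a measure \<Rightarrow> ('a \<Rightarrow> real) \<Rightarrow> bool" where
  "centered_gaussian_rv M Y \<longleftrightarrow> Y \<in> borel_measurable M \<and>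
     ((AE \<omega> in M. Y \<omega> = 0) \<or>
      (\<exists>\<sigma>>0. distributed M lborel Y (\<lambda>x. ennreal (normal_density 0 \<sigma> x))))"

text \<open>Mean-zero stationary Gaussian process indexed by the reals (here: the circle, via
  the 1-periodic covariance) with covariance kernel K and a.s. continuous sample paths.\<close>
definition continuous_stationary_gaussian_process ::
    "'a measure \<Rightarrow> (real \<Rightarrow> 'a \<Rightarrow> real) \<Rightarrow> (real \<Rightarrow> real) \<Rightarrow> bool" where
  "continuous_stationary_gaussian_process M X K \<longleftrightarrow>
     prob_space M \<and>
     (\<forall>I c. finite I \<longrightarrow> centered_gaussian_rv M (\<lambda>\<omega>. \<Sum>t\<in>I. c t * X t \<omega>)) \<and>
     (\<forall>s t. integrable M (\<lambda>\<omega>. X s \<omega> * X t \<omega>) \<and>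
            (\<integral>\<omega>. X s \<omega> * X t \<omega> \<partial>M) = K (s - t)) \<and>
     (AE \<omega> in M. continuous_on UNIV (\<lambda>t. X t \<omega>))"

end

theory Submission
  imports Defs
begin

(* Let lam < 0 and q = lam + p' + p^2 with p smooth, 1-periodic and of mean zero.  Then p has a
   zero x at which it is non-increasing, so q x <= lam and (q x)^2 >= lam^2.  It therefore suffices
   to show (q x)^2 <= K 0 * <q, K^-1 q> for every continuous 1-periodic q.

   Average q against the kernel cos (pi (x - t))^(2m), normalised to mass one.  The averages tend
   to q x as m grows, since the kernel concentrates at the integers.  The kernel is a trigonometric
   polynomial with the binomial coefficients binom(2m, k) as Fourier coefficients, so by
   Cauchy-Schwarz the square of the average is at most <q, K^-1 q> times
   4^m / binom(2m, m) * integral K(t) cos (pi t)^(2m) dt, which is at most K 0.  Both facts used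
   about K, nonnegative Fourier coefficients and K t <= K 0, hold because K is positive definite as
   a covariance. *)

lemma has_integral_cis_int:
  fixes j :: int
  shows "((\<lambda>t::real. cis (2 * pi * of_int j * t)) has_integral (if j = 0 then 1 else 0)) {0..1}"
proof (cases "j = 0")
  case True
  then show ?thesis using has_integral_const_real[of "1::complex" 0 1] by simp
next
  case False
  define a where "a = \<i> * complex_of_real (2 * pi * of_int j)"
  have a0: "a \<noteq> 0" using False by (simp add: a_def)
  have eq: "cis (2 * pi * of_int j * t) = exp (a * complex_of_real t)" for t
    by (simp add: a_def cis_conv_exp mult_ac)
  have "((\<lambda>x. exp (a * x) / a) has_vector_derivative exp (a * t)) (at t within {0..1})" for t
    using a0
    by (intro derivative_eq_intros has_complex_derivative_imp_has_vector_derivative [unfolded o_def] | simp)+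
  then have "((\<lambda>t. exp (a * of_real t)) has_integral
      exp (a * complex_of_real 1) / a - exp (a * of_real 0) / a) {0..1}"
    by (meson fundamental_theorem_of_calculus zero_le_one)
  moreover have "exp (a * complex_of_real 1) = 1"
    using eq[of 1] by simp
  ultimately show ?thesis using False by (simp add: eq)
qed

definition cos_kernel :: "nat \<Rightarrow> real \<Rightarrow> real" where
  "cos_kernel m s = cos (pi * s) ^ (2 * m)"

lemma cos_kernel_nonneg: "0 \<le> cos_kernel m s"
  by (simp add: cos_kernel_def power_mult)

lemma continuous_on_cos_kernel [continuous_intros]:
  fixes f :: "real \<Rightarrow> real"
  assumes "continuous_on S f"
  shows "continuous_on S (\<lambda>x. cos_kernel m (f x))"
  unfolding cos_kernel_def by (intro continuous_intros assms)

lemma cos_kernel_binomial_expansion: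
  "complex_of_real (4 ^ m * cos_kernel m t) =
     (\<Sum>k\<le>2*m. of_nat (2*m choose k) * cis (2 * pi * of_int (int k - int m) * t))"
proof -
  have c: "complex_of_real (2 * cos (pi * t)) = cis (pi * t) + cis (- (pi * t))"
    by (simp add: complex_eq_iff)
  have "complex_of_real (4 ^ m * cos_kernel m t) = (complex_of_real (2 * cos (pi * t))) ^ (2*m)"
    by (simp add: cos_kernel_def power_mult_distrib power_mult)
  also have "\<dots> = (\<Sum>k\<le>2*m. of_nat (2*m choose k) * cis (pi * t) ^ k * cis (- (pi * t)) ^ (2*m - k))"
    unfolding c binomial_ring ..
  also have "\<dots> = (\<Sum>k\<le>2*m. of_nat (2*m choose k) * cis (2 * pi * of_int (int k - int m) * t))"
  proof (rule sum.cong[OF refl])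
    fix k assume "k \<in> {..2*m}"
    then have "real k * (pi * t) + real (2*m - k) * (- (pi * t)) = 2 * pi * of_int (int k - int m) * t"
      by (simp add: of_nat_diff algebra_simps)
    moreover have "cis (pi * t) ^ k * cis (- (pi * t)) ^ (2*m - k) =
        cis (real k * (pi * t) + real (2*m - k) * (- (pi * t)))"
      by (subst Complex.DeMoivre)+ (rule cis_mult)
    ultimately show "of_nat (2*m choose k) * cis (pi * t) ^ k * cis (- (pi * t)) ^ (2*m - k) =
        of_nat (2*m choose k) * cis (2 * pi * of_int (int k - int m) * t)"
      by (simp add: mult.assoc)
  qed
  finally show ?thesis .
qed

lemma fourier_coeff_has_integral:
  assumes "continuous_on UNIV f"
  shows "((\<lambda>x. complex_of_real (f x) * cis (- 2 * pi * real_of_int n * x))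
           has_integral fourier_coeff f n) {0..1}"
proof -
  have "continuous_on {0..1} (\<lambda>x. complex_of_real (f x) * cis (- 2 * pi * real_of_int n * x))"
    using assms by (intro continuous_intros) (auto intro: continuous_on_subset)
  then show ?thesis unfolding fourier_coeff_def
    by (intro integrable_integral integrable_continuous_interval)
qed

lemma Re_fourier_coeff:
  assumes "continuous_on UNIV f"
  shows "Re (fourier_coeff f n) = integral {0..1} (\<lambda>x. f x * cos (2 * pi * real_of_int n * x))"
proof -
  have "((\<lambda>x. Re (complex_of_real (f x) * cis (- 2 * pi * real_of_int n * x)))
          has_integral Re (fourier_coeff f n)) {0..1}"
    using has_integral_linear[OF fourier_coeff_has_integral[OF assms] bounded_linear_Re]
    by (simp add: o_def)
  then show ?thesis by (simp add: integral_unique)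
qed

lemma fourier_coeff_const_one: "fourier_coeff (\<lambda>_. 1) n = (if n = 0 then 1 else 0)"
  unfolding fourier_coeff_def using has_integral_cis_int[of "- n"]
  by (intro integral_unique) simp

lemma fourier_sum_cos_kernel:
  assumes f: "continuous_on UNIV f"
  shows "(\<Sum>k\<le>2*m. of_nat (2*m choose k) * fourier_coeff f (int k - int m)
                     * cis (2 * pi * of_int (int k - int m) * x))
         = complex_of_real (4 ^ m * integral {0..1} (\<lambda>t. f t * cos_kernel m (x - t)))"
proof -
  let ?e = "\<lambda>k t. cis (2 * pi * of_int (int k - int m) * t)"
  let ?c = "\<lambda>k. of_nat (2*m choose k) * ?e k x"
  have "((\<lambda>t. \<Sum>k\<le>2*m. ?c k * (complex_of_real (f t) * cis (- 2 * pi * real_of_int (int k - int m) * t)))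
        has_integral (\<Sum>k\<le>2*m. ?c k * fourier_coeff f (int k - int m))) {0..1}"
    by (intro has_integral_sum has_integral_mult_right fourier_coeff_has_integral f) auto
  moreover have "(\<Sum>k\<le>2*m. ?c k * (complex_of_real (f t) * cis (- 2 * pi * real_of_int (int k - int m) * t)))
      = complex_of_real (4 ^ m * (f t * cos_kernel m (x - t)))" for t
  proof -
    have "?e k x * cis (- 2 * pi * real_of_int (int k - int m) * t) = ?e k (x - t)" for k
      by (simp add: cis_mult algebra_simps)
    then have "(\<Sum>k\<le>2*m. ?c k * (complex_of_real (f t) * cis (- 2 * pi * real_of_int (int k - int m) * t)))
       = complex_of_real (f t) * (\<Sum>k\<le>2*m. of_nat (2*m choose k) * ?e k (x - t))"
      by (simp add: sum_distrib_left mult_ac)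
    also have "\<dots> = complex_of_real (f t) * complex_of_real (4 ^ m * cos_kernel m (x - t))"
      by (simp only: cos_kernel_binomial_expansion)
    finally show ?thesis by simp
  qed
  moreover have "((\<lambda>t. complex_of_real (4 ^ m * (f t * cos_kernel m (x - t)))) has_integral
       complex_of_real (4 ^ m * integral {0..1} (\<lambda>t. f t * cos_kernel m (x - t)))) {0..1}"
    using f by (intro has_integral_of_real has_integral_mult_right integrable_integral
        integrable_continuous_interval continuous_intros) (auto intro: continuous_on_subset)
  ultimately show ?thesis
    by (simp add: mult_ac has_integral_unique)
qed

lemma has_integral_cos_kernel:
  "((\<lambda>t. cos_kernel m (x - t)) has_integral real (2*m choose m) / 4 ^ m) {0..1}"
proof -
  have "complex_of_real (4 ^ m * integral {0..1} (\<lambda>t. 1 * cos_kernel m (x - t)))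
     = (\<Sum>k\<le>2*m. of_nat (2*m choose k) * fourier_coeff (\<lambda>_. 1) (int k - int m)
                 * cis (2 * pi * of_int (int k - int m) * x))"
    by (rule fourier_sum_cos_kernel[symmetric]) simp
  also have "\<dots> = (\<Sum>k\<le>2*m. if k = m then of_nat (2*m choose m) else 0)"
    by (rule sum.cong[OF refl]) (simp add: fourier_coeff_const_one)
  finally have "complex_of_real (4 ^ m * integral {0..1} (\<lambda>t. cos_kernel m (x - t)))
      = complex_of_real (real (2*m choose m))"
    by simp
  then have "4 ^ m * integral {0..1} (\<lambda>t. cos_kernel m (x - t)) = real (2*m choose m)"
    by (simp only: of_real_eq_iff)
  moreover have "(\<lambda>t. cos_kernel m (x - t)) integrable_on {0..1}"
    by (intro integrable_continuous_interval continuous_intros)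
  ultimately show ?thesis
    by (metis integrable_integral nonzero_mult_div_cancel_left power_not_zero zero_neq_numeral)
qed

definition kernel_mean :: "nat \<Rightarrow> (real \<Rightarrow> real) \<Rightarrow> real \<Rightarrow> real" where
  "kernel_mean m q x =
     integral {0..1} (\<lambda>t. q t * cos_kernel m (x - t)) / (real (2*m choose m) / 4 ^ m)"

lemma periodic_add_of_int:
  fixes g :: "real \<Rightarrow> 'a"
  assumes per: "\<forall>x. g (x + 1) = g x"
  shows "g (x + of_int k) = g x"
proof (induction k rule: int_induct[where k = 0])
  case (step1 i)
  then show ?case using per[rule_format, of "x + of_int i"] by (simp add: algebra_simps)
next
  case (step2 i)
  then show ?case using per[rule_format, of "x + of_int (i - 1)"] by (simp add: algebra_simps)
qed simp

lemma sum_periodic_differences: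
  fixes g :: "real \<Rightarrow> real" and N i :: nat
  assumes per: "\<forall>x. g (x + 1) = g x" and N: "N > 0"
  shows "(\<Sum>j<N. g ((real i - real j) / N)) = (\<Sum>d<N. g (real d / N))"
proof -
  define r where "r j = nat ((int i - int j) mod int N)" for j
  have eq: "g ((real i - real j) / N) = g (real (r j) / N)" for j
  proof -
    let ?z = "int i - int j"
    have "real_of_int ?z = real_of_int (?z mod int N) + real N * real_of_int (?z div int N)"
      by (metis mod_mult_div_eq of_int_add of_int_mult of_int_of_nat_eq)
    moreover have "real_of_int (?z mod int N) = real (r j)"
      using N by (simp add: r_def)
    ultimately have "(real i - real j) / N = real (r j) / N + real_of_int (?z div int N)"
      using N by (simp add: field_simps)
    then show ?thesis using periodic_add_of_int[OF per] by simp
  qed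
  have "inj_on r {..<N}"
  proof (rule inj_onI)
    fix a b assume "a \<in> {..<N}" "b \<in> {..<N}" "r a = r b"
    then have "(int i - int a) mod int N = (int i - int b) mod int N" "a < N" "b < N"
      using N by (simp_all add: r_def eq_nat_nat_iff)
    then have "int a mod int N = int b mod int N"
      using mod_diff_cong[OF refl[of "int i mod int N"]] by fastforce
    then show "a = b" using \<open>a < N\<close> \<open>b < N\<close> by simp
  qed
  moreover have "r ` {..<N} \<subseteq> {..<N}"
    using N by (auto simp: r_def nat_less_iff)
  ultimately have "bij_betw r {..<N} {..<N}"
    by (simp add: bij_betw_def endo_inj_surj)
  then show ?thesis
    using eq sum.reindex_bij_betw[of r "{..<N}" "{..<N}" "\<lambda>d. g (real d / N)"] by simp
qed

text \<open>Evenness is part of the definition: real quadratic forms only see \<open>K t + K (- t)\<close>.\<close>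
definition positive_definite :: "(real \<Rightarrow> real) \<Rightarrow> bool" where
  "positive_definite K \<longleftrightarrow> (\<forall>t. K (- t) = K t) \<and>
     (\<forall>(N::nat) (c::nat \<Rightarrow> real) (t::nat \<Rightarrow> real). 0 \<le> (\<Sum>i<N. \<Sum>j<N. c i * c j * K (t i - t j)))"

lemma positive_definiteD:
  fixes N :: nat and c u :: "nat \<Rightarrow> real"
  assumes "positive_definite K"
  shows "K (- t) = K t" and "0 \<le> (\<Sum>i<N. \<Sum>j<N. c i * c j * K (u i - u j))"
  using assms unfolding positive_definite_def by simp_all

lemma stationary_covariance_positive_definite:
  assumes "continuous_stationary_gaussian_process M X K"
  shows "positive_definite K"
proof -
  have int: "\<And>s u. integrable M (\<lambda>\<omega>. X s \<omega> * X u \<omega>)"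
    and cov: "\<And>s u. (\<integral>\<omega>. X s \<omega> * X u \<omega> \<partial>M) = K (s - u)"
    using assms unfolding continuous_stationary_gaussian_process_def by auto
  have "K (- t) = K t" for t
    using cov[of 0 t] cov[of t 0] by (simp add: mult.commute)
  moreover have "0 \<le> (\<Sum>i<N. \<Sum>j<N. c i * c j * K (t i - t j))" for N c t
  proof -
    have "(\<Sum>i<N. \<Sum>j<N. c i * c j * K (t i - t j))
        = (\<Sum>i<N. \<Sum>j<N. \<integral>\<omega>. c i * c j * (X (t i) \<omega> * X (t j) \<omega>) \<partial>M)"
      by (simp add: cov)
    also have "\<dots> = (\<integral>\<omega>. (\<Sum>i<N. \<Sum>j<N. c i * c j * (X (t i) \<omega> * X (t j) \<omega>)) \<partial>M)"
      using int by (simp add: Bochner_Integration.integral_sum Bochner_Integration.integrable_sum)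
    also have "\<dots> = (\<integral>\<omega>. (\<Sum>i<N. c i * X (t i) \<omega>)\<^sup>2 \<partial>M)"
      by (simp add: power2_eq_square sum_product mult_ac)
    finally show ?thesis by simp
  qed
  ultimately show ?thesis unfolding positive_definite_def by blast
qed

lemma positive_definite_le_zero:
  assumes "positive_definite K"
  shows "K t \<le> K 0"
proof -
  let ?c = "\<lambda>i::nat. if i = 0 then 1 else - 1 :: real"
  let ?t = "\<lambda>i::nat. if i = 0 then t else 0"
  have "0 \<le> (\<Sum>i<2. \<Sum>j<2. ?c i * ?c j * K (?t i - ?t j))"
    by (rule positive_definiteD(2)[OF assms])
  then have "0 \<le> 2 * K 0 - K t - K (- t)" by (simp add: numeral_2_eq_2)
  then show ?thesis using positive_definiteD(1)[OF assms] by simp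
qed

text \<open>\<open>N\<close> times the sum is the sum of the quadratic forms of \<open>K\<close> at the points \<open>i / N\<close> with
  coefficients \<open>cos (2 pi n i / N)\<close> and \<open>sin (2 pi n i / N)\<close>.\<close>
lemma positive_definite_discrete_fourier_nonneg:
  fixes n :: int and N :: nat
  assumes pd: "positive_definite K" and per: "\<forall>x. K (x + 1) = K x" and N: "N > 0"
  shows "0 \<le> (\<Sum>d<N. K (real d / N) * cos (2 * pi * real_of_int n * (real d / N)))"
proof -
  define g where "g x = K x * cos (2 * pi * real_of_int n * x)" for x
  have "cos (2 * pi * real_of_int n * (x + 1)) = cos (2 * pi * real_of_int n * x)" for x
  proof -
    have "2 * pi * real_of_int n * (x + 1) = 2 * pi * real_of_int n * x + 2 * pi * real_of_int n"
      by (simp add: algebra_simps)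
    then show ?thesis by (simp only: cos_add cos_int_2pin sin_int_2pin) simp?
  qed
  with per have gper: "\<forall>x. g (x + 1) = g x" by (simp add: g_def)
  define t where "t i = real i / N" for i :: nat
  define a where "a i = 2 * pi * real_of_int n * t i" for i :: nat
  have "0 \<le> (\<Sum>i<N. \<Sum>j<N. cos (a i) * cos (a j) * K (t i - t j))
          + (\<Sum>i<N. \<Sum>j<N. sin (a i) * sin (a j) * K (t i - t j))"
    by (intro add_nonneg_nonneg positive_definiteD(2)[OF pd])
  also have "\<dots> = (\<Sum>i<N. \<Sum>j<N. g ((real i - real j) / N))"
    unfolding sum.distrib[symmetric]
  proof (intro sum.cong refl)
    fix i j
    have "a i - a j = 2 * pi * real_of_int n * ((real i - real j) / N)"
      by (simp add: a_def t_def algebra_simps diff_divide_distrib)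
    moreover have "t i - t j = (real i - real j) / N" by (simp add: t_def diff_divide_distrib)
    moreover have "cos (a i) * cos (a j) * K (t i - t j) + sin (a i) * sin (a j) * K (t i - t j)
        = cos (a i - a j) * K (t i - t j)"
      by (simp add: cos_diff algebra_simps)
    ultimately show "cos (a i) * cos (a j) * K (t i - t j) + sin (a i) * sin (a j) * K (t i - t j)
        = g ((real i - real j) / N)"
      by (simp add: g_def mult.commute)
  qed
  also have "\<dots> = real N * (\<Sum>d<N. g (real d / N))"
    by (simp add: sum_periodic_differences[OF gper N])
  finally show ?thesis using N by (simp add: g_def zero_le_mult_iff)
qed

lemma integral_sum_uniform_pieces:
  fixes g :: "real \<Rightarrow> real" and n :: nat
  assumes g: "continuous_on {0..1} g" and n: "n > 0"
  shows "k \<le> n \<Longrightarrow> integral {0..real k / n} g = (\<Sum>d<k. integral {real d / n..real (Suc d) / n} g)"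
proof (induction k)
  case (Suc k)
  have "{0..real (Suc k) / n} \<subseteq> {0..1}" using Suc.prems n by (auto simp: field_simps)
  then have "integral {0..real k / n} g + integral {real k / n..real (Suc k) / n} g
      = integral {0..real (Suc k) / n} g"
    using n by (intro Henstock_Kurzweil_Integration.integral_combine integrable_continuous_interval
        continuous_on_subset[OF g]) (auto simp: divide_right_mono)
  then show ?case using Suc by simp
qed simp

lemma integral_minus_left_endpoint_le:
  fixes g :: "real \<Rightarrow> real"
  assumes ab: "a \<le> b" and g: "continuous_on {a..b} g" and e: "\<And>x. x \<in> {a..b} \<Longrightarrow> \<bar>g x - g a\<bar> \<le> e"
  shows "\<bar>integral {a..b} g - g a * (b - a)\<bar> \<le> e * (b - a)"
proof -
  have "integral {a..b} g - g a * (b - a) = integral {a..b} (\<lambda>x. g x - g a)"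
    using ab g by (simp add: integral_diff integrable_continuous_interval)
  also have "\<bar>\<dots>\<bar> \<le> e * (b - a)"
    using integral_bound[OF ab, of "\<lambda>x. g x - g a" e] e continuous_on_diff[OF g continuous_on_const]
    by auto
  finally show ?thesis .
qed

lemma riemann_sum_error_le:
  fixes g :: "real \<Rightarrow> real"
  assumes g: "continuous_on {0..1} g" and n: "0 < n"
    and modulus: "\<And>x x'. x \<in> {0..1} \<Longrightarrow> x' \<in> {0..1} \<Longrightarrow> \<bar>x - x'\<bar> \<le> 1 / n \<Longrightarrow> \<bar>g x - g x'\<bar> \<le> e"
  shows "\<bar>(\<Sum>d<n. g (real d / n)) / n - integral {0..1} g\<bar> \<le> e"
proof -
  have piece: "\<bar>integral {real d / n..real (Suc d) / n} g - g (real d / n) / n\<bar> \<le> e / n"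
    if d: "d < n" for d
  proof -
    have sub: "{real d / n..real (Suc d) / n} \<subseteq> {0..1}" using d by (auto simp: field_simps)
    have "\<bar>g x - g (real d / n)\<bar> \<le> e" if x: "x \<in> {real d / n..real (Suc d) / n}" for x
    proof (rule modulus)
      show "x \<in> {0..1}" using x sub by blast
      show "real d / n \<in> {0..1}" using d by simp
      show "\<bar>x - real d / n\<bar> \<le> 1 / n" using x by (simp add: add_divide_distrib)
    qed
    then have "\<bar>integral {real d / n..real (Suc d) / n} g - g (real d / n) * (real (Suc d) / n - real d / n)\<bar>
        \<le> e * (real (Suc d) / n - real d / n)"
      by (intro integral_minus_left_endpoint_le continuous_on_subset[OF g sub])
        (auto simp: divide_right_mono)
    moreover have "real (Suc d) / n - real d / n = 1 / n" by (simp add: diff_divide_distrib[symmetric])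
    ultimately show ?thesis by simp
  qed
  have "\<bar>(\<Sum>d<n. g (real d / n)) / n - integral {0..1} g\<bar>
      = \<bar>\<Sum>d<n. integral {real d / n..real (Suc d) / n} g - g (real d / n) / n\<bar>"
    using integral_sum_uniform_pieces[OF g n, of n] n
    by (simp add: sum_subtractf sum_divide_distrib abs_minus_commute)
  also have "\<dots> \<le> (\<Sum>d<n. e / n)"
    by (intro order_trans[OF sum_abs] sum_mono piece) simp
  also have "\<dots> = e" using n by simp
  finally show ?thesis .
qed

lemma riemann_sum_tendsto_integral:
  fixes g :: "real \<Rightarrow> real"
  assumes g: "continuous_on {0..1} g"
  shows "(\<lambda>N. (\<Sum>d<Suc N. g (real d / real (Suc N))) / real (Suc N)) \<longlonglongrightarrow> integral {0..1} g"
proof (rule LIMSEQ_I)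
  fix r :: real assume r: "r > 0"
  have "uniformly_continuous_on {0..1} g" using g compact_uniformly_continuous by blast
  then obtain \<delta> where \<delta>: "\<delta> > 0"
    and hd: "\<And>x x'. x \<in> {0..1} \<Longrightarrow> x' \<in> {0..1} \<Longrightarrow> dist x' x < \<delta> \<Longrightarrow> dist (g x') (g x) < r / 2"
    using r unfolding uniformly_continuous_on_def by (meson half_gt_zero)
  obtain N0 :: nat where N0: "1 / \<delta> < real N0" using reals_Archimedean2 by blast
  show "\<exists>N0. \<forall>N\<ge>N0. norm ((\<Sum>d<Suc N. g (real d / real (Suc N))) / real (Suc N) - integral {0..1} g) < r"
  proof (intro exI allI impI)
    fix N assume "N \<ge> N0"
    then have "1 / \<delta> < real (Suc N)" using N0 by simp
    then have "1 / real (Suc N) < \<delta>" using \<delta> by (simp add: field_simps)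
    then have "\<bar>(\<Sum>d<Suc N. g (real d / real (Suc N))) / real (Suc N) - integral {0..1} g\<bar> \<le> r / 2"
      using hd by (intro riemann_sum_error_le[OF g]) (force simp: dist_real_def)+
    then show "norm ((\<Sum>d<Suc N. g (real d / real (Suc N))) / real (Suc N) - integral {0..1} g) < r"
      using r by simp
  qed
qed

lemma positive_definite_Re_fourier_coeff_nonneg:
  assumes pd: "positive_definite K" and per: "\<forall>x. K (x + 1) = K x" and K: "continuous_on UNIV K"
  shows "0 \<le> Re (fourier_coeff K n)"
proof -
  define g where "g x = K x * cos (2 * pi * real_of_int n * x)" for x
  have "continuous_on {0..1} g" unfolding g_def
    by (intro continuous_intros continuous_on_subset[OF K]) auto
  then have "(\<lambda>N. (\<Sum>d<Suc N. g (real d / real (Suc N))) / real (Suc N)) \<longlonglongrightarrow> integral {0..1} g"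
    by (rule riemann_sum_tendsto_integral)
  moreover have "0 \<le> (\<Sum>d<Suc N. g (real d / real (Suc N))) / real (Suc N)" for N
    using positive_definite_discrete_fourier_nonneg[OF pd per, of "Suc N" n] by (simp add: g_def)
  ultimately have "0 \<le> integral {0..1} g" by (simp add: LIMSEQ_le_const)
  then show ?thesis using Re_fourier_coeff[OF K] unfolding g_def[abs_def] by simp
qed

lemma cos_kernel_le_away_from_integers:
  assumes d: "0 < \<delta>" "\<delta> \<le> 1/2"
    and s: "\<bar>s\<bar> \<le> 1" "\<delta> \<le> \<bar>s\<bar>" "\<delta> \<le> \<bar>s - 1\<bar>" "\<delta> \<le> \<bar>s + 1\<bar>"
  shows "cos_kernel m s \<le> cos (pi * \<delta>) ^ (2 * m)"
proof -
  have abs_cos_le: "\<bar>cos (pi * s')\<bar> \<le> cos (pi * \<delta>)" if "\<delta> \<le> s'" "s' \<le> 1 - \<delta>" for s'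
  proof -
    have "cos (pi * s') \<le> cos (pi * \<delta>)"
      using that d by (intro cos_monotone_0_pi_le) auto
    moreover have "cos (pi * (1 - s')) \<le> cos (pi * \<delta>)"
      using that d by (intro cos_monotone_0_pi_le) auto
    moreover have "cos (pi * (1 - s')) = - cos (pi * s')" by (simp add: algebra_simps)
    ultimately show ?thesis by linarith
  qed
  have "\<bar>cos (pi * s)\<bar> \<le> cos (pi * \<delta>)"
  proof (cases "s \<ge> 0")
    case True
    then show ?thesis using s by (intro abs_cos_le) auto
  next
    case False
    then have "\<bar>cos (pi * (- s))\<bar> \<le> cos (pi * \<delta>)" using s by (intro abs_cos_le) auto
    then show ?thesis by simp
  qed
  then have "\<bar>cos (pi * s)\<bar> ^ (2 * m) \<le> cos (pi * \<delta>) ^ (2 * m)"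
    by (intro power_mono) auto
  then show ?thesis by (simp add: cos_kernel_def power_even_abs)
qed

lemma four_power_div_central_binomial_le: "4 ^ m / real (2*m choose m) \<le> real (2*m + 1)"
proof -
  have "(\<Sum>k\<le>2*m. 2*m choose k) \<le> card {..2*m} * (2*m choose m)"
    using sum_bounded_above[of "{..2*m}" "\<lambda>k. 2*m choose k" "2*m choose m"] binomial_maximum'
    by simp
  then have "2 ^ (2*m) \<le> (2*m + 1) * (2*m choose m)" by (simp add: choose_row_sum)
  then have "real (2 ^ (2*m)) \<le> real ((2*m + 1) * (2*m choose m))" by (simp only: of_nat_le_iff)
  then show ?thesis by (simp add: power_mult pos_divide_le_eq ring_distribs)
qed

lemma abs_has_integral_le:
  fixes f g :: "'a::euclidean_space \<Rightarrow> real"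
  assumes f: "(f has_integral I) S" and g: "(g has_integral J) S" and le: "\<And>t. t \<in> S \<Longrightarrow> \<bar>f t\<bar> \<le> g t"
  shows "\<bar>I\<bar> \<le> J"
proof -
  have "I \<le> J" using has_integral_le[OF f g] le by (simp add: abs_le_iff)
  moreover have "- I \<le> J" using has_integral_le[OF has_integral_neg[OF f] g] le by (simp add: abs_le_iff)
  ultimately show ?thesis by simp
qed

lemma linear_times_even_power_tendsto_zero:
  fixes \<rho> :: real
  assumes "0 \<le> \<rho>" "\<rho> < 1"
  shows "(\<lambda>m. real (2*m + 1) * \<rho> ^ (2*m)) \<longlonglongrightarrow> 0"
proof -
  have n: "norm (\<rho>\<^sup>2) < 1" using assms by (simp add: abs_square_less_1)
  have "(\<lambda>m. 2 * (of_nat m * (\<rho>\<^sup>2) ^ m) + (\<rho>\<^sup>2) ^ m) \<longlonglongrightarrow> 2 * 0 + 0"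
    by (intro tendsto_intros powser_times_n_limit_0 LIMSEQ_power_zero n)
  moreover have "real (2*m + 1) * \<rho> ^ (2*m) = 2 * (of_nat m * (\<rho>\<^sup>2) ^ m) + (\<rho>\<^sup>2) ^ m" for m
    by (simp only: power_mult[symmetric]) (simp add: algebra_simps)
  ultimately show ?thesis by simp
qed

text \<open>Near \<open>x\<close> (modulo 1) the deviation \<open>q t - q x\<close> is small; elsewhere the kernel is
  exponentially small in \<open>m\<close>.\<close>
lemma deviation_times_cos_kernel_le:
  fixes q :: "real \<Rightarrow> real"
  assumes per: "\<forall>x. q (x + 1) = q x" and x: "x \<in> {0..1}" and t: "t \<in> {0..1}"
    and M: "\<And>t. t \<in> {0..1} \<Longrightarrow> \<bar>q t\<bar> \<le> M"
    and d: "0 < \<delta>" "\<delta> \<le> 1/2"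
    and near: "\<And>y. \<bar>y - x\<bar> < \<delta> \<Longrightarrow> \<bar>q y - q x\<bar> \<le> e"
  shows "\<bar>q t - q x\<bar> * cos_kernel m (x - t) \<le> e * cos_kernel m (x - t) + 2 * M * cos (pi * \<delta>) ^ (2*m)"
proof -
  define s where "s = x - t"
  have M0: "0 \<le> M" using M[OF t] by linarith
  have e0: "0 \<le> e" using near[of x] d by simp
  have \<rho>0: "0 \<le> cos (pi * \<delta>) ^ (2*m)" by (simp add: power_mult)
  show ?thesis
  proof (cases "\<bar>s\<bar> < \<delta> \<or> \<bar>s - 1\<bar> < \<delta> \<or> \<bar>s + 1\<bar> < \<delta>")
    case True
    then obtain y where "q y = q t" "\<bar>y - x\<bar> < \<delta>"
    proof (elim disjE)
      assume "\<bar>s - 1\<bar> < \<delta>"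
      then show thesis using per that[of "t + 1"] by (simp add: s_def abs_minus_commute)
    next
      assume "\<bar>s + 1\<bar> < \<delta>"
      moreover have "q (t - 1) = q t" using per[rule_format, of "t - 1"] by simp
      ultimately show thesis using that[of "t - 1"] by (simp add: s_def abs_minus_commute)
    qed (use that[of t] in \<open>simp add: s_def abs_minus_commute\<close>)
    then have "\<bar>q t - q x\<bar> \<le> e" using near by metis
    then have "\<bar>q t - q x\<bar> * cos_kernel m (x - t) \<le> e * cos_kernel m (x - t)"
      by (intro mult_right_mono cos_kernel_nonneg)
    moreover have "0 \<le> 2 * M * cos (pi * \<delta>) ^ (2*m)" using M0 \<rho>0 by simp
    ultimately show ?thesis by linarith
  next
    case False
    then have "cos_kernel m s \<le> cos (pi * \<delta>) ^ (2*m)"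
      using x t d by (intro cos_kernel_le_away_from_integers) (auto simp: s_def)
    moreover have "\<bar>q t - q x\<bar> \<le> 2 * M" using M[OF t] M[OF x] by linarith
    ultimately have "\<bar>q t - q x\<bar> * cos_kernel m (x - t) \<le> 2 * M * cos (pi * \<delta>) ^ (2*m)"
      using M0 by (intro mult_mono) (auto simp: s_def cos_kernel_nonneg)
    then show ?thesis using mult_nonneg_nonneg[OF e0 cos_kernel_nonneg[of m "x - t"]] by linarith
  qed
qed

lemma kernel_mean_error_le:
  fixes q :: "real \<Rightarrow> real"
  assumes qc: "continuous_on UNIV q" and per: "\<forall>x. q (x + 1) = q x" and x: "x \<in> {0..1}"
    and M: "\<And>t. t \<in> {0..1} \<Longrightarrow> \<bar>q t\<bar> \<le> M"
    and d: "0 < \<delta>" "\<delta> \<le> 1/2"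
    and near: "\<And>y. \<bar>y - x\<bar> < \<delta> \<Longrightarrow> \<bar>q y - q x\<bar> \<le> e"
  shows "\<bar>kernel_mean m q x - q x\<bar> \<le> e + 2 * M * (real (2*m + 1) * cos (pi * \<delta>) ^ (2*m))"
proof -
  define B where "B t = cos_kernel m (x - t)" for t
  define c where "c = real (2*m choose m) / 4 ^ m"
  define Iq where "Iq = integral {0..1} (\<lambda>t. q t * B t)"
  define \<epsilon> where "\<epsilon> = 2 * M * cos (pi * \<delta>) ^ (2*m)"
  have c0: "c > 0" by (simp add: c_def)
  have \<epsilon>0: "0 \<le> \<epsilon>"
    using M[of 0] by (simp add: \<epsilon>_def power_mult)
  have iB: "(B has_integral c) {0..1}"
    unfolding B_def c_def by (rule has_integral_cos_kernel)
  have "((\<lambda>t. q t * B t) has_integral Iq) {0..1}" unfolding Iq_def B_def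
    by (intro integrable_integral integrable_continuous_interval continuous_intros
        continuous_on_subset[OF qc]) auto
  then have idev: "((\<lambda>t. (q t - q x) * B t) has_integral Iq - q x * c) {0..1}"
    using has_integral_diff[OF _ has_integral_mult_right[OF iB, of "q x"]]
    by (simp add: algebra_simps)
  have ibound: "((\<lambda>t. e * B t + \<epsilon>) has_integral e * c + \<epsilon>) {0..1}"
    using has_integral_add[OF has_integral_mult_right[OF iB] has_integral_const_real[of \<epsilon> 0 1]]
    by simp
  have "\<bar>Iq - q x * c\<bar> \<le> e * c + \<epsilon>"
  proof (rule abs_has_integral_le[OF idev ibound])
    show "\<bar>(q t - q x) * B t\<bar> \<le> e * B t + \<epsilon>" if "t \<in> {0..1}" for t
      using deviation_times_cos_kernel_le[OF per x that M d near]
      by (simp add: B_def \<epsilon>_def abs_mult cos_kernel_nonneg)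
  qed
  have "Iq / c - q x = (Iq - q x * c) / c"
    using c0 by (simp add: diff_divide_distrib)
  then have "\<bar>Iq / c - q x\<bar> = \<bar>Iq - q x * c\<bar> / c"
    using c0 by simp
  also have "\<dots> \<le> (e * c + \<epsilon>) / c"
    using c0 \<open>\<bar>Iq - q x * c\<bar> \<le> e * c + \<epsilon>\<close> by (intro divide_right_mono) auto
  also have "\<dots> = e + \<epsilon> * (1 / c)"
    using c0 by (simp add: add_divide_distrib)
  also have "\<dots> \<le> e + \<epsilon> * real (2*m + 1)"
  proof -
    have "1 / c \<le> real (2*m + 1)" using four_power_div_central_binomial_le[of m] by (simp add: c_def)
    then show ?thesis using \<epsilon>0 by (intro add_left_mono mult_left_mono)
  qed
  finally show ?thesis
    by (simp add: kernel_mean_def Iq_def B_def c_def \<epsilon>_def mult.commute mult.left_commute)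
qed

lemma tendsto_kernel_mean:
  fixes q :: "real \<Rightarrow> real"
  assumes qc: "continuous_on UNIV q" and per: "\<forall>x. q (x + 1) = q x" and x: "x \<in> {0..1}"
  shows "(\<lambda>m. kernel_mean m q x) \<longlonglongrightarrow> q x"
proof (rule LIMSEQ_I)
  fix \<epsilon> :: real assume \<epsilon>: "\<epsilon> > 0"
  have "bounded (q ` {0..1})"
    by (intro compact_imp_bounded compact_continuous_image continuous_on_subset[OF qc]) auto
  then obtain M where M0: "M > 0" and M: "\<And>t. t \<in> {0..1} \<Longrightarrow> \<bar>q t\<bar> \<le> M"
    by (auto simp: bounded_pos)
  have "isCont q x" using qc by (simp add: continuous_on_eq_continuous_at)
  then obtain \<delta>0 where \<delta>0: "\<delta>0 > 0" and near0: "\<And>y. dist y x < \<delta>0 \<Longrightarrow> dist (q y) (q x) < \<epsilon> / 2"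
    using \<epsilon> unfolding continuous_at_eps_delta by (meson half_gt_zero)
  define \<delta> where "\<delta> = min \<delta>0 (1/2)"
  have d: "0 < \<delta>" "\<delta> \<le> 1/2" using \<delta>0 by (auto simp: \<delta>_def)
  have near: "\<bar>q y - q x\<bar> \<le> \<epsilon> / 2" if "\<bar>y - x\<bar> < \<delta>" for y
    using near0[of y] that by (simp add: \<delta>_def dist_real_def)
  have "0 \<le> pi * \<delta>" "pi * \<delta> \<le> pi / 2" using d by simp_all
  then have "0 \<le> cos (pi * \<delta>)" using pi_gt_zero by (intro cos_ge_zero) linarith+
  moreover have "cos (pi * \<delta>) < 1" using cos_monotone_0_pi[of 0 "pi * \<delta>"] d by simp
  ultimately have "(\<lambda>m. real (2*m + 1) * cos (pi * \<delta>) ^ (2*m)) \<longlonglongrightarrow> 0"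
    by (rule linear_times_even_power_tendsto_zero)
  then have "eventually (\<lambda>m. real (2*m + 1) * cos (pi * \<delta>) ^ (2*m) < \<epsilon> / (4 * M)) sequentially"
    using \<epsilon> M0 by (intro order_tendstoD) auto
  then obtain m0 where m0: "\<And>m. m \<ge> m0 \<Longrightarrow> real (2*m + 1) * cos (pi * \<delta>) ^ (2*m) < \<epsilon> / (4 * M)"
    by (auto simp: eventually_sequentially)
  show "\<exists>m0. \<forall>m\<ge>m0. norm (kernel_mean m q x - q x) < \<epsilon>"
  proof (intro exI allI impI)
    fix m assume "m \<ge> m0"
    have "\<bar>kernel_mean m q x - q x\<bar> \<le> \<epsilon> / 2 + 2 * M * (real (2*m + 1) * cos (pi * \<delta>) ^ (2*m))"
      by (rule kernel_mean_error_le[OF qc per x M d near])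
    also have "\<dots> < \<epsilon> / 2 + 2 * M * (\<epsilon> / (4 * M))"
      using m0[OF \<open>m \<ge> m0\<close>] M0 by (intro add_strict_left_mono mult_strict_left_mono) auto
    also have "\<dots> = \<epsilon>" using M0 by (simp add: field_simps)
    finally show "norm (kernel_mean m q x - q x) < \<epsilon>" by simp
  qed
qed

definition inv_cov_term :: "(real \<Rightarrow> real) \<Rightarrow> (real \<Rightarrow> real) \<Rightarrow> int \<Rightarrow> real" where
  "inv_cov_term K q n =
     (if Re (fourier_coeff K n) = 0 then 0
      else (cmod (fourier_coeff q n))\<^sup>2 / Re (fourier_coeff K n))"

lemma abs_cos_kernel_integral_le:
  assumes "continuous_on UNIV q"
  shows "\<bar>4 ^ m * integral {0..1} (\<lambda>t. q t * cos_kernel m (x - t))\<bar>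
         \<le> (\<Sum>k\<le>2*m. real (2*m choose k) * cmod (fourier_coeff q (int k - int m)))"
proof -
  have "\<bar>4 ^ m * integral {0..1} (\<lambda>t. q t * cos_kernel m (x - t))\<bar>
      = cmod (\<Sum>k\<le>2*m. of_nat (2*m choose k) * fourier_coeff q (int k - int m)
                        * cis (2 * pi * of_int (int k - int m) * x))"
    by (simp only: fourier_sum_cos_kernel[OF assms] norm_of_real)
  also have "\<dots> \<le> (\<Sum>k\<le>2*m. cmod (of_nat (2*m choose k) * fourier_coeff q (int k - int m)
                                   * cis (2 * pi * of_int (int k - int m) * x)))"
    by (rule norm_sum)
  also have "\<dots> = (\<Sum>k\<le>2*m. real (2*m choose k) * cmod (fourier_coeff q (int k - int m)))"
    by (simp add: norm_mult)
  finally show ?thesis .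
qed

lemma cos_kernel_fourier_sum_le:
  assumes Kc: "continuous_on UNIV K" and Kb: "\<And>t. K t \<le> K 0"
  shows "(\<Sum>k\<le>2*m. real (2*m choose k) * Re (fourier_coeff K (int k - int m)))
         \<le> K 0 * real (2*m choose m)"
proof -
  have "(\<Sum>k\<le>2*m. real (2*m choose k) * Re (fourier_coeff K (int k - int m)))
      = Re (\<Sum>k\<le>2*m. of_nat (2*m choose k) * fourier_coeff K (int k - int m)
                        * cis (2 * pi * of_int (int k - int m) * 0))"
    by simp
  also have "\<dots> = 4 ^ m * integral {0..1} (\<lambda>t. K t * cos_kernel m (0 - t))"
    by (simp only: fourier_sum_cos_kernel[OF Kc] Re_complex_of_real)
  also have "\<dots> \<le> 4 ^ m * (K 0 * (real (2*m choose m) / 4 ^ m))"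
  proof (rule mult_left_mono)
    have "((\<lambda>t. K t * cos_kernel m (0 - t)) has_integral
            integral {0..1} (\<lambda>t. K t * cos_kernel m (0 - t))) {0..1}"
      by (intro integrable_integral integrable_continuous_interval continuous_intros
          continuous_on_subset[OF Kc]) auto
    then show "integral {0..1} (\<lambda>t. K t * cos_kernel m (0 - t)) \<le> K 0 * (real (2*m choose m) / 4 ^ m)"
      using has_integral_mult_right[OF has_integral_cos_kernel[of m 0], of "K 0"]
      by (rule has_integral_le) (intro mult_right_mono Kb cos_kernel_nonneg)
  qed simp
  finally show ?thesis by simp
qed

text \<open>Cauchy--Schwarz, pairing \<open>u k / sqrt (r k)\<close> with \<open>C k * sqrt (r k)\<close>.\<close>
lemma weighted_Cauchy_Schwarz:
  fixes C u r :: "'a \<Rightarrow> real"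
  assumes C: "\<And>k. k \<in> A \<Longrightarrow> 0 \<le> C k \<and> C k \<le> c" and r: "\<And>k. k \<in> A \<Longrightarrow> 0 \<le> r k"
    and vanish: "\<And>k. k \<in> A \<Longrightarrow> r k = 0 \<Longrightarrow> u k = 0"
  shows "(\<Sum>k\<in>A. C k * u k)\<^sup>2
         \<le> (\<Sum>k\<in>A. if r k = 0 then 0 else (u k)\<^sup>2 / r k) * (c * (\<Sum>k\<in>A. C k * r k))"
proof -
  define v where "v k = (if r k = 0 then 0 else u k / sqrt (r k))" for k
  define w where "w k = C k * sqrt (r k)" for k
  have "(\<Sum>k\<in>A. C k * u k)\<^sup>2 = (\<Sum>k\<in>A. v k * w k)\<^sup>2"
    using vanish r by (intro arg_cong[where f = "\<lambda>s. s\<^sup>2"] sum.cong) (auto simp: v_def w_def)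
  also have "\<dots> \<le> (\<Sum>k\<in>A. (v k)\<^sup>2) * (\<Sum>k\<in>A. (w k)\<^sup>2)" by (rule Cauchy_Schwarz_ineq_sum)
  also have "\<dots> \<le> (\<Sum>k\<in>A. if r k = 0 then 0 else (u k)\<^sup>2 / r k) * (c * (\<Sum>k\<in>A. C k * r k))"
  proof (rule mult_mono)
    show "(\<Sum>k\<in>A. (v k)\<^sup>2) \<le> (\<Sum>k\<in>A. if r k = 0 then 0 else (u k)\<^sup>2 / r k)"
      using r by (intro sum_mono) (simp add: v_def power_divide)
    have "(w k)\<^sup>2 \<le> c * (C k * r k)" if "k \<in> A" for k
      using C[OF that] r[OF that] mult_right_mono[of "C k" c "C k * r k"]
      by (simp add: w_def power2_eq_square mult_ac)
    then show "(\<Sum>k\<in>A. (w k)\<^sup>2) \<le> c * (\<Sum>k\<in>A. C k * r k)"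
      by (simp add: sum_distrib_left sum_mono)
  qed (use r in \<open>auto intro: sum_nonneg\<close>)
  finally show ?thesis .
qed

lemma kernel_mean_square_le:
  assumes qc: "continuous_on UNIV q" and Kc: "continuous_on UNIV K"
    and Rpos: "\<And>n. 0 \<le> Re (fourier_coeff K n)" and Kb: "\<And>t. K t \<le> K 0"
    and vanish: "\<And>n. Re (fourier_coeff K n) = 0 \<Longrightarrow> fourier_coeff q n = 0"
  shows "(kernel_mean m q x)\<^sup>2 \<le> K 0 * (\<Sum>k\<le>2*m. inv_cov_term K q (int k - int m))"
proof -
  define I where "I = integral {0..1} (\<lambda>t. q t * cos_kernel m (x - t))"
  define C where "C k = real (2*m choose k)" for k
  define u where "u k = cmod (fourier_coeff q (int k - int m))" for k
  define r where "r k = Re (fourier_coeff K (int k - int m))" for k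
  have Cm: "0 < C m" by (simp add: C_def)
  have "\<bar>4 ^ m * I\<bar> \<le> (\<Sum>k\<le>2*m. C k * u k)"
    unfolding I_def C_def u_def by (rule abs_cos_kernel_integral_le[OF qc])
  then have "(4 ^ m * I)\<^sup>2 \<le> (\<Sum>k\<le>2*m. C k * u k)\<^sup>2"
    using power_mono[OF _ abs_ge_zero, of "4 ^ m * I" _ 2] by simp
  also have "\<dots> \<le> (\<Sum>k\<le>2*m. if r k = 0 then 0 else (u k)\<^sup>2 / r k) * (C m * (\<Sum>k\<le>2*m. C k * r k))"
    by (rule weighted_Cauchy_Schwarz) (use binomial_maximum' Rpos vanish in \<open>auto simp: C_def r_def u_def\<close>)
  also have "\<dots> = (\<Sum>k\<le>2*m. inv_cov_term K q (int k - int m)) * (C m * (\<Sum>k\<le>2*m. C k * r k))"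
    by (simp add: inv_cov_term_def u_def r_def cong: if_cong)
  also have "\<dots> \<le> (\<Sum>k\<le>2*m. inv_cov_term K q (int k - int m)) * (C m * (K 0 * C m))"
    using cos_kernel_fourier_sum_le[OF Kc Kb, of m] Cm Rpos
    by (intro mult_left_mono sum_nonneg) (auto simp: C_def r_def inv_cov_term_def)
  finally have "(4 ^ m * I)\<^sup>2 / (C m)\<^sup>2
      \<le> (\<Sum>k\<le>2*m. inv_cov_term K q (int k - int m)) * (C m * (K 0 * C m)) / (C m)\<^sup>2"
    by (rule divide_right_mono) simp
  moreover have "kernel_mean m q x = 4 ^ m * I / C m"
    by (simp add: kernel_mean_def I_def C_def mult.commute)
  ultimately show ?thesis using Cm by (simp add: power_divide power2_eq_square mult_ac)
qed

lemma sum_le_nn_integral_count_space: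
  fixes F :: "'b \<Rightarrow> ennreal"
  assumes "finite A"
  shows "(\<Sum>a\<in>A. F a) \<le> (\<integral>\<^sup>+n. F n \<partial>count_space UNIV)"
proof -
  have "(\<integral>\<^sup>+n. F n * indicator A n \<partial>count_space UNIV) = (\<Sum>a\<in>A. F a * emeasure (count_space UNIV) {a})"
    by (rule nn_integral_indicator_finite[OF assms]) auto
  then have "(\<Sum>a\<in>A. F a) = (\<integral>\<^sup>+n. F n * indicator A n \<partial>count_space UNIV)"
    by simp
  also have "\<dots> \<le> (\<integral>\<^sup>+n. F n \<partial>count_space UNIV)"
    by (intro nn_integral_mono) (auto split: split_indicator)
  finally show ?thesis .
qed

lemma inv_cov_form_finite_vanishing:
  assumes "inv_cov_form K q \<noteq> \<infinity>" and "Re (fourier_coeff K n) = 0"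
  shows "fourier_coeff q n = 0"
proof (rule ccontr)
  define F where "F n = (if Re (fourier_coeff K n) = 0
      then (if fourier_coeff q n = 0 then 0 else \<infinity>)
      else ennreal ((cmod (fourier_coeff q n))\<^sup>2 / Re (fourier_coeff K n)))" for n
  assume "fourier_coeff q n \<noteq> 0"
  then have "F n = \<infinity>" using assms(2) by (simp add: F_def)
  moreover have "F n \<le> inv_cov_form K q"
    using sum_le_nn_integral_count_space[of "{n}" F] unfolding inv_cov_form_def F_def by simp
  ultimately show False using assms(1) by (simp add: top_unique)
qed

lemma sum_inv_cov_term_le_inv_cov_form:
  assumes Rpos: "\<And>n. 0 \<le> Re (fourier_coeff K n)" and "finite A"
  shows "ennreal (\<Sum>n\<in>A. inv_cov_term K q n) \<le> inv_cov_form K q"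
proof -
  have "ennreal (\<Sum>n\<in>A. inv_cov_term K q n) = (\<Sum>n\<in>A. ennreal (inv_cov_term K q n))"
    using Rpos by (intro sum_ennreal[symmetric]) (simp add: inv_cov_term_def)
  also have "\<dots> \<le> (\<Sum>n\<in>A. if Re (fourier_coeff K n) = 0
                              then (if fourier_coeff q n = 0 then 0 else \<infinity>)
                              else ennreal ((cmod (fourier_coeff q n))\<^sup>2 / Re (fourier_coeff K n)))"
    by (intro sum_mono) (simp add: inv_cov_term_def)
  also have "\<dots> \<le> inv_cov_form K q"
    unfolding inv_cov_form_def by (rule sum_le_nn_integral_count_space[OF \<open>finite A\<close>])
  finally show ?thesis .
qed

lemma positive_definite_zero_nonneg:
  assumes "positive_definite K"
  shows "0 \<le> K 0"
  using positive_definiteD(2)[OF assms, where N = 1 and c = "\<lambda>_. 1" and u = "\<lambda>_. 0"] by simp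

lemma kernel_mean_square_le_inv_cov_form:
  assumes Kc: "continuous_on UNIV K" and Kper: "\<forall>x. K (x + 1) = K x" and pd: "positive_definite K"
    and qc: "continuous_on UNIV q" and S: "inv_cov_form K q = ennreal S" "0 \<le> S"
  shows "(kernel_mean m q x)\<^sup>2 \<le> K 0 * S"
proof -
  have Rpos: "0 \<le> Re (fourier_coeff K n)" for n
    by (rule positive_definite_Re_fourier_coeff_nonneg[OF pd Kper Kc])
  have "inj_on (\<lambda>k. int k - int m) {..2*m}" by (auto simp: inj_on_def)
  then have "(\<Sum>k\<le>2*m. inv_cov_term K q (int k - int m))
      = (\<Sum>n\<in>(\<lambda>k. int k - int m) ` {..2*m}. inv_cov_term K q n)"
    by (simp add: sum.reindex)
  also have "\<dots> \<le> S"
    using sum_inv_cov_term_le_inv_cov_form[OF Rpos, of "(\<lambda>k. int k - int m) ` {..2*m}" q] S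
    by (simp add: ennreal_le_iff)
  finally have "K 0 * (\<Sum>k\<le>2*m. inv_cov_term K q (int k - int m)) \<le> K 0 * S"
    using positive_definite_zero_nonneg[OF pd] by (rule mult_left_mono)
  moreover have "fourier_coeff q n = 0" if "Re (fourier_coeff K n) = 0" for n
    using inv_cov_form_finite_vanishing[OF _ that] S by simp
  ultimately show ?thesis
    using kernel_mean_square_le[OF qc Kc Rpos positive_definite_le_zero[OF pd]] by (meson order_trans)
qed

lemma square_le_inv_cov_form:
  assumes Kc: "continuous_on UNIV K" and Kper: "\<forall>x. K (x + 1) = K x" and pd: "positive_definite K"
    and qc: "continuous_on UNIV q" and qper: "\<forall>x. q (x + 1) = q x"
  shows "ennreal ((q x)\<^sup>2 / K 0) \<le> inv_cov_form K q"
proof (cases "inv_cov_form K q" rule: ennreal_cases)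
  case (real S)
  define y where "y = x - of_int \<lfloor>x\<rfloor>"
  have y: "y \<in> {0..1}" by (simp add: y_def) linarith
  have "q y = q x" using periodic_add_of_int[OF qper, of x "- \<lfloor>x\<rfloor>"] by (simp add: y_def)
  moreover have "(\<lambda>m. (kernel_mean m q y)\<^sup>2) \<longlonglongrightarrow> (q y)\<^sup>2"
    by (intro tendsto_intros tendsto_kernel_mean[OF qc qper y])
  then have "(q y)\<^sup>2 \<le> K 0 * S"
    using kernel_mean_square_le_inv_cov_form[OF Kc Kper pd qc \<open>inv_cov_form K q = ennreal S\<close> \<open>0 \<le> S\<close>] by (intro LIMSEQ_le_const2) auto
  ultimately have "(q x)\<^sup>2 \<le> K 0 * S" by simp
  then have "(q x)\<^sup>2 / K 0 \<le> S"
    using positive_definite_zero_nonneg[OF pd] \<open>0 \<le> S\<close>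
    by (cases "K 0 = 0") (simp_all add: pos_divide_le_eq mult.commute)
  then show ?thesis by (simp add: \<open>inv_cov_form K q = ennreal S\<close> ennreal_leI)
qed simp


lemma smooth_funD:
  assumes "smooth_fun p"
  shows smooth_fun_DERIV: "DERIV p x :> deriv p x"
    and smooth_fun_continuous: "continuous_on UNIV p"
    and smooth_fun_deriv_continuous: "continuous_on UNIV (deriv p)"
proof -
  have "((deriv ^^ 0) p) differentiable (at y)" "((deriv ^^ 1) p) differentiable (at y)" for y
    using assms unfolding smooth_fun_def by blast+
  then have d0: "p differentiable (at y)" and d1: "deriv p differentiable (at y)" for y
    by simp_all
  show "DERIV p x :> deriv p x" using d0 DERIV_deriv_iff_real_differentiable by blast
  show "continuous_on UNIV p" "continuous_on UNIV (deriv p)"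
    using d0 d1 by (auto intro!: continuous_at_imp_continuous_on differentiable_imp_continuous_within)
qed

lemma deriv_periodic:
  assumes s: "smooth_fun p" and per: "\<forall>x. p (x + 1) = p x"
  shows "deriv p (x + 1) = deriv p x"
proof -
  have "DERIV (\<lambda>y. p (y + 1)) x :> deriv p (x + 1)"
    using smooth_fun_DERIV[OF s, of "x + 1"] by (simp only: DERIV_shift)
  moreover have "(\<lambda>y. p (y + 1)) = p" using per by auto
  ultimately show ?thesis by (metis DERIV_imp_deriv)
qed

lemma continuous_nonneg_integral_eq_0:
  fixes f :: "real \<Rightarrow> real"
  assumes "a < b" and f: "continuous_on {a..b} f" and nonneg: "\<And>x. x \<in> {a..b} \<Longrightarrow> 0 \<le> f x"
    and "integral {a..b} f = 0" and "x \<in> {a..b}"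
  shows "f x = 0"
proof -
  have "(f has_integral 0) {a..b}"
    using assms(4) integrable_continuous_interval[OF f] by (metis integrable_integral)
  then show ?thesis using f nonneg \<open>a < b\<close> \<open>x \<in> {a..b}\<close> by (intro has_integral_0_cbox_imp_0[of a b f]) auto
qed

lemma first_zero_after_positive:
  fixes f :: "real \<Rightarrow> real"
  assumes f: "continuous_on {a..b} f" and fa: "0 < f a" and fb: "f b \<le> 0" and "a \<le> b"
  obtains x where "a < x" "x \<le> b" "f x = 0" "\<And>y. a \<le> y \<Longrightarrow> y < x \<Longrightarrow> 0 < f y"
proof -
  define S where "S = {x \<in> {a..b}. f x \<le> 0}"
  have "b \<in> S" using fb \<open>a \<le> b\<close> by (simp add: S_def)
  have "closed S"
    unfolding S_def using f by (intro continuous_on_closed_Collect_le continuous_on_const) auto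
  have "bdd_below S" by (auto simp: S_def bdd_below_def)
  define x where "x = Inf S"
  have "x \<in> S" unfolding x_def using \<open>b \<in> S\<close> \<open>bdd_below S\<close> \<open>closed S\<close> by (intro closed_contains_Inf) auto
  then have "a \<le> x" "x \<le> b" "f x \<le> 0" by (auto simp: S_def)
  have "x \<noteq> a" using fa \<open>f x \<le> 0\<close> by auto
  with \<open>a \<le> x\<close> have "a < x" by simp
  have pos: "0 < f y" if "a \<le> y" "y < x" for y
  proof (rule ccontr)
    assume "\<not> 0 < f y"
    then have "y \<in> S" using that \<open>x \<le> b\<close> by (auto simp: S_def)
    then have "x \<le> y" unfolding x_def using \<open>bdd_below S\<close> by (rule cInf_lower)
    then show False using that by simp
  qed
  have "f x = 0"
  proof (rule ccontr)
    assume "f x \<noteq> 0"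
    have "continuous_on {a..x} f" by (rule continuous_on_subset[OF f]) (use \<open>x \<le> b\<close> in auto)
    then obtain y where "a \<le> y" "y \<le> x" "f y = 0"
      using IVT2'[of f x 0 a] \<open>f x \<le> 0\<close> fa \<open>a < x\<close> by auto
    moreover from this have "y \<noteq> x" using \<open>f x \<noteq> 0\<close> by auto
    ultimately show False using pos[of y] by simp
  qed
  show thesis by (rule that[OF \<open>a < x\<close> \<open>x \<le> b\<close> \<open>f x = 0\<close> pos])
qed

lemma DERIV_nonpos_at_first_zero:
  fixes f :: "real \<Rightarrow> real"
  assumes "DERIV f x :> D" and "f x = 0" and "a < x" and pos: "\<And>y. a \<le> y \<Longrightarrow> y < x \<Longrightarrow> 0 < f y"
  shows "D \<le> 0"
proof (rule ccontr)
  assume "\<not> D \<le> 0"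
  then obtain d where "0 < d" and dec: "\<And>h. 0 < h \<Longrightarrow> h < d \<Longrightarrow> f (x - h) < f x"
    using DERIV_pos_inc_left[OF assms(1)] by force
  define h where "h = min (d / 2) (x - a)"
  have "0 < h" "h < d" "h \<le> x - a" using \<open>0 < d\<close> \<open>a < x\<close> by (auto simp: h_def)
  then show False using dec[of h] pos[of "x - h"] \<open>f x = 0\<close> by simp
qed

text \<open>Mean zero forces a sign change; the first zero after a positive value is a downward
  crossing.\<close>
lemma mean_zero_periodic_down_crossing:
  assumes s: "smooth_fun p" and per: "\<forall>x. p (x + 1) = p x" and i: "integral {0..1} p = 0"
  obtains x where "p x = 0" "deriv p x \<le> 0"
proof -
  have pc: "continuous_on UNIV p" by (rule smooth_fun_continuous[OF s])
  then have pc01: "continuous_on {0..1} p" by (rule continuous_on_subset) simp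
  show thesis
  proof (cases "\<exists>a. 0 < p a")
    case True
    then obtain a where "0 < p a" by blast
    have "\<exists>c\<in>{0..1}. p c \<le> 0"
    proof (rule ccontr)
      assume "\<not> ?thesis"
      then have pos: "0 < p x" if "x \<in> {0..1}" for x using that by (auto simp: not_le)
      then have "p 0 = 0" by (intro continuous_nonneg_integral_eq_0[OF zero_less_one pc01 _ i] less_imp_le) simp_all
      then show False using pos[of 0] by simp
    qed
    then obtain c where "p c \<le> 0" by blast
    define b where "b = c + real_of_int (\<lceil>a - c\<rceil> + 1)"
    have "a \<le> b" unfolding b_def by linarith
    have "p b \<le> 0" using periodic_add_of_int[OF per, of c "\<lceil>a - c\<rceil> + 1"] \<open>p c \<le> 0\<close>
      by (simp only: b_def)
    obtain x where "a < x" "p x = 0" and pos: "\<And>y. a \<le> y \<Longrightarrow> y < x \<Longrightarrow> 0 < p y"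
      by (rule first_zero_after_positive[OF continuous_on_subset[OF pc] \<open>0 < p a\<close> \<open>p b \<le> 0\<close> \<open>a \<le> b\<close>]) auto
    have "deriv p x \<le> 0"
      using DERIV_nonpos_at_first_zero[OF smooth_fun_DERIV[OF s] \<open>p x = 0\<close> \<open>a < x\<close> pos] .
    from \<open>p x = 0\<close> this show thesis by (rule that)
  next
    case False
    then have np: "p x \<le> 0" for x by (simp add: not_less)
    have "continuous_on {0..1} (\<lambda>x. - p x)" using pc01 by (intro continuous_intros)
    moreover have "0 \<le> - p x" if "x \<in> {0..1}" for x using np[of x] by simp
    moreover have "integral {0..1} (\<lambda>x. - p x) = 0" using i by simp
    ultimately have "- p 0 = 0"
      using continuous_nonneg_integral_eq_0[OF zero_less_one, of "\<lambda>x. - p x" 0] by simp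
    then have "p 0 = 0" by simp
    moreover have "deriv p 0 = 0"
      by (rule DERIV_local_max[OF smooth_fun_DERIV[OF s] zero_less_one]) (use np \<open>p 0 = 0\<close> in simp)
    ultimately show thesis using that by fastforce
  qed
qed

lemma A_set_continuous_periodic:
  assumes "q \<in> A_set lam"
  shows "continuous_on UNIV q" and "\<forall>x. q (x + 1) = q x"
proof -
  obtain p where s: "smooth_fun p" and per: "\<forall>x. p (x + 1) = p x"
    and q: "q = (\<lambda>x. lam + deriv p x + (p x)\<^sup>2)"
    using assms unfolding A_set_def by blast
  show "continuous_on UNIV q" unfolding q
    using smooth_fun_continuous[OF s] smooth_fun_deriv_continuous[OF s] by (intro continuous_intros)
  show "\<forall>x. q (x + 1) = q x" unfolding q using per deriv_periodic[OF s per] by simp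
qed

text \<open>At a downward zero crossing of \<open>p\<close>, \<open>q = lam + p' + p^2 \<le> lam\<close>.\<close>
lemma A_set_exists_le:
  assumes "q \<in> A_set lam"
  shows "\<exists>x. q x \<le> lam"
proof -
  obtain p where s: "smooth_fun p" and per: "\<forall>x. p (x + 1) = p x" and i: "integral {0..1} p = 0"
    and q: "q = (\<lambda>x. lam + deriv p x + (p x)\<^sup>2)"
    using assms unfolding A_set_def by blast
  obtain x where "p x = 0" "deriv p x \<le> 0" by (rule mean_zero_periodic_down_crossing[OF s per i])
  then show ?thesis unfolding q by (intro exI[of _ x]) simp
qed

lemma J_functional_lower_bound:
  assumes Kc: "continuous_on UNIV K" and Kper: "\<forall>x. K (x + 1) = K x" and pd: "positive_definite K"
    and K0: "0 < K 0" and lam: "lam \<le> 0" and q: "q \<in> A_set lam"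
  shows "ennreal (lam\<^sup>2 / (2 * K 0)) \<le> J_functional K q"
proof -
  obtain x where "q x \<le> lam" using A_set_exists_le[OF q] by blast
  then have "(- lam)\<^sup>2 \<le> (- q x)\<^sup>2" using lam by (intro power_mono) auto
  then have "lam\<^sup>2 / K 0 \<le> (q x)\<^sup>2 / K 0" using K0 by (intro divide_right_mono) auto
  then have "ennreal (lam\<^sup>2 / K 0) \<le> inv_cov_form K q"
    using square_le_inv_cov_form[OF Kc Kper pd A_set_continuous_periodic[OF q], of x]
    by (meson ennreal_leI order_trans)
  then have "ennreal (lam\<^sup>2 / K 0) / 2 \<le> J_functional K q"
    unfolding J_functional_def by (rule divide_right_mono_ennreal)
  moreover have "ennreal (lam\<^sup>2 / K 0) / 2 = ennreal (lam\<^sup>2 / (2 * K 0))"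
    using K0 by (subst ennreal_divide_numeral) (auto simp: field_simps)
  ultimately show ?thesis by simp
qed

theorem theorem4:
  fixes K :: "real \<Rightarrow> real" and M :: "'a measure" and X :: "real \<Rightarrow> 'a \<Rightarrow> real"
  assumes "continuous_on UNIV K"
    and "\<forall>x. K (x + 1) = K x"
    and "continuous_stationary_gaussian_process M X K"
    and "integral {0..1} K = 1"
  shows "Liminf at_bot (\<lambda>lam. (INF q\<in>A_set lam. J_functional K q) / ennreal (lam\<^sup>2))
           \<ge> ennreal (1 / (2 * K 0))"
proof (cases "0 < K 0")
  case K0: True
  have pd: "positive_definite K"
    by (rule stationary_covariance_positive_definite[OF assms(3)])
  have "ennreal (1 / (2 * K 0)) \<le> (INF q\<in>A_set lam. J_functional K q) / ennreal (lam\<^sup>2)"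
    if "lam < 0" for lam :: real
  proof -
    have "ennreal (lam\<^sup>2 / (2 * K 0)) \<le> (INF q\<in>A_set lam. J_functional K q)"
      using J_functional_lower_bound[OF assms(1,2) pd K0] that by (auto intro: INF_greatest)
    then have "ennreal (lam\<^sup>2 / (2 * K 0)) / ennreal (lam\<^sup>2)
        \<le> (INF q\<in>A_set lam. J_functional K q) / ennreal (lam\<^sup>2)"
      by (rule divide_right_mono_ennreal)
    moreover have "ennreal (lam\<^sup>2 / (2 * K 0)) / ennreal (lam\<^sup>2) = ennreal (1 / (2 * K 0))"
      using that K0 by (subst divide_ennreal) (auto simp: field_simps)
    ultimately show ?thesis by simp
  qed
  then show ?thesis
    by (intro Liminf_bounded eventually_at_bot_linorderI[of "-1"]) auto
qed (simp add: ennreal_neg)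

end
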